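(* Let $n=p_1^{m_1}\cdots p_k^{m_k}$ with $m_i>1$ for at least one $i$. Then: (1) The Laplacian spectrum of $\mathcal E_{\mathbb Z_n}(\mathscr U)$ consists of $N_I$ with multiplicity $n_I-1=\prod_{i\notin\Xi_I}m_i-1$ for each $I\in V(\mathscr G)$ with $n_I>1$, together with the $2^k-2$ eigenvalues of the symmetric matrix $C_L(\mathscr G)$ indexed by $V(\mathscr G)$ with $(C_L)_{II}=N_I$, $(C_L)_{IJ}=-\sqrt{n_In_J}$ if $I\sim J$ in $\mathscr G$, $0$ otherwise. (2) The signless Laplacian spectrum of $\mathcal E_{\mathbb Z_n}(\mathscr U)$ consists of $N_I$ with multiplicity $n_I-1$ for each $I\in V(\mathscr G)$, together with the eigenvalues of the matrix $C_Q(\mathscr G)$ with $(C_Q)_{II}=N_I$, $(C_Q)_{IJ}=\sqrt{n_In_J}$ if $I\sim J$ in $\mathscr G$, $0$ otherwise. (3) The normalized Laplacian spectrum of $\mathcal E_{\mathbb Z_n}(\mathscr U)$ consists of $1$ with multiplicity $\sum_{I\in V(\mathscr G)}(n_I-1)$, together with the eigenvalues of the matrix $C_{\mathscr L}(\mathscr G)$ with $(C_{\mathscr L})_{II}=1$, $(C_{\mathscr L})_{IJ}=-\sqrt{\frac{n_In_J}{N_IN_J}}$ if $I\sim J$ in $\mathscr G$, $0$ otherwise.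
   Context: Primes $p_1<\dots<p_k$, positive integers $m_i$. Nonzero proper ideals of $\mathbb Z_n$ are uniquely $\langle p_1^{r_1}\cdots p_k^{r_k}\rangle$, $0\le r_i\le m_i$, $(r_i)\ne(0,\dots,0),(m_1,\dots,m_k)$; essential iff $r_j\ne m_j$ for all $j$. Essential ideal graph $\mathcal E_{\mathbb Z_n}$: vertices nonzero proper ideals, distinct $I,K$ adjacent iff $I+K$ essential. $\mathscr U$ = nonzero proper nonessential ideals, $\mathcal E_{\mathbb Z_n}(\mathscr U)$ the induced subgraph. $\Xi_I=\{i:r_i=m_i\}$; $[I]=\{J\in\mathscr U:\Xi_J=\Xi_I\}$. $\mathscr G$: vertex set the $2^k-2$ ideals $\langle\prod_{i\in S}p_i^{m_i}\rangle$, $S$ nonempty proper subset of $\{1,\dots,k\}$, $I\sim J$ iff $\Xi_I\cap\Xi_J=\emptyset$. $n_I=|[I]|=\prod_{i\notin\Xi_I}m_i$ and $N_I=\sum_{J\in V(\mathscr G),\,\Xi_I\cap\Xi_J=\emptyset}n_J$. For a graph with adjacency matrix $A$ and degree matrix $D$: Laplacian $L=D-A$, signless Laplacian $Q=D+A$, normalized Laplacian $\mathscr L=D^{-1/2}LD^{-1/2}$. *)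

theory Defs
  imports "Jordan_Normal_Form.Char_Poly" "HOL-Computational_Algebra.Primes"
begin

text \<open>Ideals of Z_n are represented by their generators: the nonzero proper ideal
  generated by a divisor d of n (d \<noteq> 1 for proper, d \<noteq> n for nonzero).
  With n = p_1^m_1 ... p_k^m_k, the exponent r_i is multiplicity p_i d.\<close>

definition ideals :: "nat \<Rightarrow> nat set" where
  "ideals n = {d. d dvd n \<and> d \<noteq> 1 \<and> d \<noteq> n}"

text \<open>Essential: r_j \<noteq> m_j for all j (applied to any divisor, e.g. gcd = sum of ideals).\<close>
definition essential :: "nat \<Rightarrow> nat \<Rightarrow> bool" where
  "essential n d \<longleftrightarrow> d dvd n \<and> (\<forall>p\<in>prime_factors n. multiplicity p d \<noteq> multiplicity p n)"

definition Xi :: "nat \<Rightarrow> nat \<Rightarrow> nat set" where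
  "Xi n d = {p \<in> prime_factors n. multiplicity p d = multiplicity p n}"

definition Uset :: "nat \<Rightarrow> nat set" where
  "Uset n = {d \<in> ideals n. \<not> essential n d}"

text \<open>Essential ideal graph adjacency: I + K = <gcd d e> is essential.\<close>
definition Eadj :: "nat \<Rightarrow> nat \<Rightarrow> nat \<Rightarrow> bool" where
  "Eadj n d e \<longleftrightarrow> d \<noteq> e \<and> essential n (gcd d e)"

definition VG :: "nat \<Rightarrow> nat set" where
  "VG n = {\<Prod>p\<in>S. p ^ multiplicity p n | S. S \<subseteq> prime_factors n \<and> S \<noteq> {} \<and> S \<noteq> prime_factors n}"

definition Gadj :: "nat \<Rightarrow> nat \<Rightarrow> nat \<Rightarrow> bool" where
  "Gadj n d e \<longleftrightarrow> Xi n d \<inter> Xi n e = {}"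

definition nI :: "nat \<Rightarrow> nat \<Rightarrow> nat" where
  "nI n d = (\<Prod>p\<in>prime_factors n - Xi n d. multiplicity p n)"

definition NI :: "nat \<Rightarrow> nat \<Rightarrow> nat" where
  "NI n d = (\<Sum>J\<in>{J\<in>VG n. Xi n d \<inter> Xi n J = {}}. nI n J)"

definition vlist :: "nat set \<Rightarrow> nat list" where
  "vlist V = sorted_list_of_set V"

definition vmat :: "nat set \<Rightarrow> (nat \<Rightarrow> nat \<Rightarrow> real) \<Rightarrow> real mat" where
  "vmat V f = mat (length (vlist V)) (length (vlist V)) (\<lambda>(i,j). f (vlist V ! i) (vlist V ! j))"

definition deg :: "nat set \<Rightarrow> (nat \<Rightarrow> nat \<Rightarrow> bool) \<Rightarrow> nat \<Rightarrow> real" where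
  "deg V adj v = real (card {w\<in>V. adj v w})"

definition adj_matrix :: "nat set \<Rightarrow> (nat \<Rightarrow> nat \<Rightarrow> bool) \<Rightarrow> real mat" where
  "adj_matrix V adj = vmat V (\<lambda>u v. if adj u v then 1 else 0)"

definition deg_matrix :: "nat set \<Rightarrow> (nat \<Rightarrow> nat \<Rightarrow> bool) \<Rightarrow> real mat" where
  "deg_matrix V adj = vmat V (\<lambda>u v. if u = v then deg V adj u else 0)"

definition laplacian :: "nat set \<Rightarrow> (nat \<Rightarrow> nat \<Rightarrow> bool) \<Rightarrow> real mat" where
  "laplacian V adj = deg_matrix V adj - adj_matrix V adj"

definition signless_laplacian :: "nat set \<Rightarrow> (nat \<Rightarrow> nat \<Rightarrow> bool) \<Rightarrow> real mat" where
  "signless_laplacian V adj = deg_matrix V adj + adj_matrix V adj"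

definition deg_inv_sqrt_matrix :: "nat set \<Rightarrow> (nat \<Rightarrow> nat \<Rightarrow> bool) \<Rightarrow> real mat" where
  "deg_inv_sqrt_matrix V adj = vmat V (\<lambda>u v. if u = v then 1 / sqrt (deg V adj u) else 0)"

definition normalized_laplacian :: "nat set \<Rightarrow> (nat \<Rightarrow> nat \<Rightarrow> bool) \<Rightarrow> real mat" where
  "normalized_laplacian V adj =
     deg_inv_sqrt_matrix V adj * laplacian V adj * deg_inv_sqrt_matrix V adj"

definition CL :: "nat \<Rightarrow> real mat" where
  "CL n = vmat (VG n) (\<lambda>I J. if I = J then real (NI n I)
            else if Gadj n I J then - sqrt (real (nI n I * nI n J)) else 0)"

definition CQ :: "nat \<Rightarrow> real mat" where
  "CQ n = vmat (VG n) (\<lambda>I J. if I = J then real (NI n I)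
            else if Gadj n I J then sqrt (real (nI n I * nI n J)) else 0)"

definition CNL :: "nat \<Rightarrow> real mat" where
  "CNL n = vmat (VG n) (\<lambda>I J. if I = J then 1
            else if Gadj n I J then - sqrt (real (nI n I * nI n J) / real (NI n I * NI n J)) else 0)"

end

(* The vertices of the essential ideal graph on U fall into the classes [I], I in V(G): each class
   is an independent set, two vertices are adjacent iff their classes are adjacent in G, and every
   vertex of [I] has degree N_I. Hence the Laplacian, the signless Laplacian and the normalized
   Laplacian are all "blow-ups" M(x,y) = [x = y] a(cl x) + w(x) b(cl x, cl y) of a matrix on V(G).
   For two vertices u, v of the same class, subtracting column u from column v and adding row v to
   row u splits off the factor (X - a(cl u)) of the characteristic polynomial and leaves the blow-up
   in which v is merged into u with weight w(u) + w(v). Iterating collapses every class [I] to one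
   vertex of weight n_I, and conjugating by diag(sqrt n_I) symmetrizes the resulting quotient matrix
   into C_L, C_Q and the normalized quotient matrix. *)

theory Submission
  imports Defs "Jordan_Normal_Form.Column_Operations"
begin

section \<open>Matrices indexed by lists\<close>

definition matL :: "'v list \<Rightarrow> ('v \<Rightarrow> 'v \<Rightarrow> 'a) \<Rightarrow> 'a mat" where
  "matL xs f = mat (length xs) (length xs) (\<lambda>(i, j). f (xs ! i) (xs ! j))"

lemma matL_carrier [simp]: "matL xs f \<in> carrier_mat (length xs) (length xs)"
  unfolding matL_def by simp

lemma index_matL [simp]:
  "i < length xs \<Longrightarrow> j < length xs \<Longrightarrow> matL xs f $$ (i, j) = f (xs ! i) (xs ! j)"
  "dim_row (matL xs f) = length xs" "dim_col (matL xs f) = length xs"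
  unfolding matL_def by auto

lemma matL_cong:
  "(\<And>x y. x \<in> set xs \<Longrightarrow> y \<in> set xs \<Longrightarrow> f x y = g x y) \<Longrightarrow> matL xs f = matL xs g"
  unfolding matL_def by (rule cong_mat) auto

lemma vmat_eq_matL: "vmat V f = matL (vlist V) f"
  unfolding vmat_def matL_def ..

lemma matL_add: "matL xs f + matL xs g = matL xs (\<lambda>x y. f x y + g x y)"
  by (rule eq_matI) auto

lemma matL_diff: "matL xs f - matL xs g = matL xs (\<lambda>x y. f x y - g x y)"
  by (rule eq_matI) auto

lemma matL_diagonal:
  "distinct xs \<Longrightarrow> matL xs (\<lambda>x y. if x = y then d x else 0) = mat_diag (length xs) (\<lambda>i. d (xs ! i))"
  by (rule eq_matI) (auto simp: mat_diag_def nth_eq_iff_index_eq)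

lemma mat_diag_mult_matL:
  "mat_diag (length xs) (\<lambda>i. d (xs ! i)) * matL xs f = matL xs (\<lambda>x y. d x * f x y)"
  by (subst mat_diag_mult_left[of _ _ "length xs"]) auto

lemma matL_mult_mat_diag:
  "matL xs f * mat_diag (length xs) (\<lambda>i. d (xs ! i)) = matL xs (\<lambda>x y. f x y * d y)"
  by (subst mat_diag_mult_right[of _ "length xs"]) auto

lemma char_poly_matrix_matL:
  "distinct xs \<Longrightarrow> char_poly_matrix (matL xs f) = matL xs (\<lambda>x y. (if x = y then [:0, 1:] else 0) - [:f x y:])"
  by (rule eq_matI) (auto simp: char_poly_matrix_def nth_eq_iff_index_eq)

lemma det_permute_rows_cols:
  assumes A: "A \<in> carrier_mat n n" and p: "p permutes {0..<n}"
  shows "det (mat n n (\<lambda>(i, j). A $$ (p i, p j))) = det A"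
proof -
  define B where "B = mat n n (\<lambda>(i, j). A $$ (i, p j))"
  have B: "B \<in> carrier_mat n n" unfolding B_def by simp
  have p_lt: "i < n \<Longrightarrow> p i < n" for i
    using p by (meson atLeastLessThan_iff permutes_in_image zero_le)
  have "mat n n (\<lambda>(i, j). A $$ (p i, p j)) = mat n n (\<lambda>(i, j). B $$ (p i, j))"
    by (rule eq_matI) (auto simp: B_def p_lt)
  hence det_rows: "det (mat n n (\<lambda>(i, j). A $$ (p i, p j))) = signof p * det B"
    using det_permute_rows[OF B p] by simp
  have "transpose_mat B = mat n n (\<lambda>(i, j). transpose_mat A $$ (p i, j))"
    by (rule eq_matI) (use A in \<open>auto simp: B_def p_lt\<close>)
  hence "det (transpose_mat B) = signof p * det (transpose_mat A)"
    using det_permute_rows[of "transpose_mat A" n p] A p by simp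
  hence det_cols: "det B = signof p * det A"
    using det_transpose[OF B] det_transpose[OF A] by simp
  have "signof p * signof p = (1::'a)"
    by (simp add: sign_def)
  thus ?thesis
    unfolding det_rows det_cols by (simp add: mult.assoc[symmetric])
qed

lemma char_poly_matL_set:
  assumes xs: "distinct xs" and ys: "distinct ys" and "set xs = set ys"
  shows "char_poly (matL ys f) = char_poly (matL xs f)"
proof -
  have "mset ys = mset xs"
    using assms by (simp add: set_eq_iff_mset_eq_distinct)
  then obtain p where p: "p permutes {..<length xs}" "permute_list p xs = ys"
    by (rule mset_eq_permutation)
  hence len: "length ys = length xs"
    by auto
  have ys_nth: "ys ! i = xs ! p i" if "i < length xs" for i
    using p permute_list_nth that by metis
  have p_lt: "p i < length xs" if "i < length xs" for i
    using permutes_in_image[OF p(1)] that by simp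
  have "char_poly_matrix (matL ys f) =
      mat (length xs) (length xs) (\<lambda>(i, j). char_poly_matrix (matL xs f) $$ (p i, p j))"
    unfolding char_poly_matrix_matL[OF xs] char_poly_matrix_matL[OF ys]
    by (rule eq_matI) (simp_all add: len ys_nth p_lt)
  moreover have "p permutes {0..<length xs}"
    using p(1) by (simp add: lessThan_atLeast0)
  ultimately show ?thesis
    unfolding char_poly_def by (simp add: det_permute_rows_cols)
qed

section \<open>Blow-up matrices and their quotients\<close>

lemma det_first_column_zero:
  assumes A: "A \<in> carrier_mat (Suc m) (Suc m)"
    and col: "\<And>i. 0 < i \<Longrightarrow> i < Suc m \<Longrightarrow> A $$ (i, 0) = 0"
  shows "det A = A $$ (0, 0) * det (mat m m (\<lambda>(i, j). A $$ (Suc i, Suc j)))"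
proof -
  let ?A4 = "mat m m (\<lambda>(i, j). A $$ (Suc i, Suc j))"
  have "A = four_block_mat (mat 1 1 (\<lambda>_. A $$ (0, 0))) (mat 1 m (\<lambda>(_, j). A $$ (0, Suc j))) (0\<^sub>m m 1) ?A4"
  proof (rule eq_matI)
    fix i j assume "i < dim_row (four_block_mat (mat 1 1 (\<lambda>_. A $$ (0, 0))) (mat 1 m (\<lambda>(_, j). A $$ (0, Suc j))) (0\<^sub>m m 1) ?A4)"
      "j < dim_col (four_block_mat (mat 1 1 (\<lambda>_. A $$ (0, 0))) (mat 1 m (\<lambda>(_, j). A $$ (0, Suc j))) (0\<^sub>m m 1) ?A4)"
    thus "A $$ (i, j) = four_block_mat (mat 1 1 (\<lambda>_. A $$ (0, 0))) (mat 1 m (\<lambda>(_, j). A $$ (0, Suc j))) (0\<^sub>m m 1) ?A4 $$ (i, j)"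
      using col by (cases i; cases j) auto
  qed (use A in auto)
  hence "det A = det (mat 1 1 (\<lambda>_. A $$ (0, 0))) * det ?A4"
    by (metis det_four_block_mat_lower_left_zero_col mat_carrier zero_carrier_mat)
  thus ?thesis
    by (simp add: det_single)
qed

lemma det_matL_twin:
  fixes F :: "'v \<Rightarrow> 'v \<Rightarrow> 'a :: comm_ring_1"
  assumes dist: "distinct (v # u # rest)"
    and cols: "\<And>z. z \<in> set rest \<Longrightarrow> F z v = F z u"
    and pv: "F v v - F v u = p" and pu: "F u u - F u v = p"
  shows "det (matL (v # u # rest) F) = p * det (matL (u # rest) (F(u := \<lambda>y. F u y + F v y)))"
proof -
  define m where "m = Suc (length rest)"
  define C where "C = matL (v # u # rest) F"
  define D where "D = addrow 1 1 0 (addcol (-1) 0 1 C)"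
  have C: "C \<in> carrier_mat (Suc m) (Suc m)"
    unfolding C_def m_def using matL_carrier[of "v # u # rest" F] by simp
  have "det D = det (addcol (-1) 0 1 C)"
    unfolding D_def by (rule det_addrow) (use C in auto)
  also have "\<dots> = det C"
    by (rule det_addcol) (use C in \<open>auto simp: m_def\<close>)
  finally have "det C = det D" ..
  have D_ij: "D $$ (i, j) =
      (if i = 1 then C $$ (0, j) + C $$ (1, j) else C $$ (i, j))
      - (if j = 0 then (if i = 1 then C $$ (0, 1) + C $$ (1, 1) else C $$ (i, 1)) else 0)"
    if "i < Suc m" "j < Suc m" for i j
    unfolding D_def using C that by (auto simp: m_def)
  have "F v v + F u v = F v u + F u u"
    using pv pu by (simp add: algebra_simps)
  moreover have "F (rest ! i) v = F (rest ! i) u" if "i < length rest" for i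
    using that by (intro cols nth_mem)
  ultimately have "D $$ (i, 0) = 0" if "0 < i" "i < Suc m" for i
    using that D_ij[OF that(2)] unfolding C_def m_def by (cases i) (auto simp: nth_Cons')
  hence "det D = D $$ (0, 0) * det (mat m m (\<lambda>(i, j). D $$ (Suc i, Suc j)))"
    using C by (intro det_first_column_zero) (auto simp: D_def)
  also have "D $$ (0, 0) = p"
    using D_ij[of 0 0] pv unfolding C_def m_def by simp
  also have "mat m m (\<lambda>(i, j). D $$ (Suc i, Suc j)) = matL (u # rest) (F(u := \<lambda>y. F u y + F v y))"
    using dist D_ij unfolding C_def m_def by (intro eq_matI) (auto simp: nth_Cons' split: nat.split)
  finally show ?thesis
    using \<open>det C = det D\<close> unfolding C_def by simp
qed

definition blow_up ::
    "('v \<Rightarrow> 'c) \<Rightarrow> ('c \<Rightarrow> 'a) \<Rightarrow> ('c \<Rightarrow> 'c \<Rightarrow> 'a) \<Rightarrow> ('v \<Rightarrow> 'a) \<Rightarrow> 'v \<Rightarrow> 'v \<Rightarrow> 'a :: comm_ring_1" where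
  "blow_up cl a b w x y = (if x = y then a (cl x) else 0) + w x * b (cl x) (cl y)"

lemma char_poly_blow_up_twin:
  assumes dist: "distinct (v # u # rest)" and cl: "cl v = cl u"
  shows "char_poly (matL (v # u # rest) (blow_up cl a b w)) =
    [:- a (cl u), 1:] * char_poly (matL (u # rest) (blow_up cl a b (w(u := w u + w v))))"
proof -
  have dist': "distinct (u # rest)" and "u \<noteq> v"
    using dist by auto
  define F where "F x y = (if x = y then [:0, 1:] else 0) - [:blow_up cl a b w x y:]" for x y
  have "det (matL (v # u # rest) F) =
      [:- a (cl u), 1:] * det (matL (u # rest) (F(u := \<lambda>y. F u y + F v y)))"
  proof (rule det_matL_twin[where F = F, OF dist])
    show "F z v = F z u" if "z \<in> set rest" for z
    proof -
      have "z \<noteq> v" "z \<noteq> u"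
        using that dist by auto
      thus ?thesis
        using cl by (simp add: F_def blow_up_def)
    qed
    show "F v v - F v u = [:- a (cl u), 1:]" "F u u - F u v = [:- a (cl u), 1:]"
      using \<open>u \<noteq> v\<close> cl by (simp_all add: F_def blow_up_def)
  qed
  also have "matL (u # rest) (F(u := \<lambda>y. F u y + F v y)) =
      char_poly_matrix (matL (u # rest) (blow_up cl a b (w(u := w u + w v))))"
    unfolding char_poly_matrix_matL[OF dist']
  proof (rule matL_cong)
    fix x y assume "x \<in> set (u # rest)" "y \<in> set (u # rest)"
    hence "v \<noteq> y" "x \<noteq> u \<Longrightarrow> v \<noteq> x"
      using dist by auto
    thus "(F(u := \<lambda>y. F u y + F v y)) x y =
        (if x = y then [:0, 1:] else 0) - [:blow_up cl a b (w(u := w u + w v)) x y:]"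
      using cl by (cases "x = u") (simp_all add: F_def blow_up_def distrib_right)
  qed
  finally have "det (matL (v # u # rest) F) = [:- a (cl u), 1:] *
      char_poly (matL (u # rest) (blow_up cl a b (w(u := w u + w v))))"
    unfolding char_poly_def .
  moreover have "matL (v # u # rest) F = char_poly_matrix (matL (v # u # rest) (blow_up cl a b w))"
    unfolding F_def by (rule char_poly_matrix_matL[OF dist, symmetric])
  ultimately show ?thesis
    unfolding char_poly_def by (simp only:)
qed

lemma char_poly_blow_up_inj:
  assumes "distinct xs" "distinct ks" "set ks = cl ` set xs" and inj: "inj_on cl (set xs)"
  shows "char_poly (matL xs (blow_up cl a b w)) =
    char_poly (matL ks (blow_up id a b (\<lambda>I. \<Sum>x\<in>{x \<in> set xs. cl x = I}. w x)))"
proof -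
  have singleton_class: "{y \<in> set xs. cl y = cl x} = {x}" if "x \<in> set xs" for x
    using inj that by (auto simp: inj_on_def)
  have "matL xs (blow_up cl a b w) =
      matL (map cl xs) (blow_up id a b (\<lambda>I. \<Sum>x\<in>{x \<in> set xs. cl x = I}. w x))"
  proof (rule eq_matI)
    fix i j assume "i < dim_row (matL (map cl xs) (blow_up id a b (\<lambda>I. \<Sum>x\<in>{x \<in> set xs. cl x = I}. w x)))"
      "j < dim_col (matL (map cl xs) (blow_up id a b (\<lambda>I. \<Sum>x\<in>{x \<in> set xs. cl x = I}. w x)))"
    hence ij: "i < length xs" "j < length xs" by auto
    hence "(xs ! i = xs ! j) = (cl (xs ! i) = cl (xs ! j))"
      using inj by (metis inj_on_eq_iff nth_mem)
    thus "matL xs (blow_up cl a b w) $$ (i, j) =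
        matL (map cl xs) (blow_up id a b (\<lambda>I. \<Sum>x\<in>{x \<in> set xs. cl x = I}. w x)) $$ (i, j)"
      using ij singleton_class[of "xs ! i"] by (simp add: blow_up_def)
  qed auto
  also have "char_poly \<dots> = char_poly (matL ks (blow_up id a b (\<lambda>I. \<Sum>x\<in>{x \<in> set xs. cl x = I}. w x)))"
    using assms by (intro char_poly_matL_set) (auto simp: distinct_map)
  finally show ?thesis .
qed

lemma sum_class_merge:
  assumes X: "finite X" "u \<in> X" "v \<in> X" "u \<noteq> v" and cl: "cl u = cl v"
  shows "(\<Sum>x\<in>{x \<in> X - {v}. cl x = I}. (w(u := w u + w v)) x) = (\<Sum>x\<in>{x \<in> X. cl x = I}. w x)"
proof (cases "I = cl v")
  case True
  hence uv: "u \<in> {x \<in> X. cl x = I} - {v}" "v \<in> {x \<in> X. cl x = I}"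
    using X cl by auto
  have "{x \<in> X - {v}. cl x = I} = {x \<in> X. cl x = I} - {v}"
    by auto
  moreover have "(\<Sum>x\<in>{x \<in> X. cl x = I} - {v}. (w(u := w u + w v)) x) =
      w v + (\<Sum>x\<in>{x \<in> X. cl x = I} - {v}. w x)"
    using sum.remove[OF _ uv(1), of "w(u := w u + w v)"] sum.remove[OF _ uv(1), of w] X(1)
    by (simp add: add_ac)
  ultimately show ?thesis
    using sum.remove[OF _ uv(2), of w] X(1) by simp
next
  case False
  hence "u \<notin> {x \<in> X. cl x = I}" "{x \<in> X - {v}. cl x = I} = {x \<in> X. cl x = I}"
    using cl by auto
  thus ?thesis
    by (intro sum.cong) auto
qed

lemma prod_class_remove:
  fixes f :: "'c \<Rightarrow> 'a :: comm_monoid_mult"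
  assumes X: "finite X" "u \<in> X" "v \<in> X" "u \<noteq> v" and cl: "cl u = cl v"
  shows "f (cl v) * (\<Prod>I\<in>cl ` X. f I ^ (card {x \<in> X - {v}. cl x = I} - 1)) =
    (\<Prod>I\<in>cl ` X. f I ^ (card {x \<in> X. cl x = I} - 1))"
proof -
  have exp: "card {x \<in> X. cl x = I} - 1 =
      (if I = cl v then Suc (card {x \<in> X - {v}. cl x = I} - 1) else card {x \<in> X - {v}. cl x = I} - 1)"
    for I
  proof (cases "I = cl v")
    case True
    have "{x \<in> X - {v}. cl x = I} = {x \<in> X. cl x = I} - {v}"
      by auto
    hence card_eq: "card {x \<in> X - {v}. cl x = I} = card {x \<in> X. cl x = I} - 1"
      using X True by (simp add: card_Diff_singleton)
    have "u \<in> {x \<in> X - {v}. cl x = I}" and "finite {x \<in> X - {v}. cl x = I}"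
      using X cl True by auto
    hence "card {x \<in> X - {v}. cl x = I} > 0"
      by (auto simp: card_gt_0_iff)
    thus ?thesis
      using card_eq True by simp
  next
    case False
    hence "{x \<in> X - {v}. cl x = I} = {x \<in> X. cl x = I}"
      by auto
    thus ?thesis
      using False by simp
  qed
  have "cl v \<in> cl ` X"
    using X by simp
  thus ?thesis
    unfolding exp using X(1)
    by (simp add: prod.If_cases Int_absorb1 prod.remove mult.assoc)
qed

lemma split_twins:
  assumes "distinct xs" "\<not> inj_on cl (set xs)"
  obtains v u rest where "distinct (v # u # rest)" "set (v # u # rest) = set xs" "cl u = cl v"
proof -
  obtain v u where uv: "v \<in> set xs" "u \<in> set xs" "u \<noteq> v" "cl u = cl v"
    using assms(2) unfolding inj_on_def by blast
  define rest where "rest = filter (\<lambda>x. x \<noteq> v \<and> x \<noteq> u) xs"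
  have "distinct (v # u # rest)" "set (v # u # rest) = set xs"
    using assms(1) uv unfolding rest_def by auto
  thus thesis
    using that uv(4) by blast
qed

lemma char_poly_blow_up:
  assumes "distinct xs" "distinct ks" "set ks = cl ` set xs"
  shows "char_poly (matL xs (blow_up cl a b w)) =
    (\<Prod>I\<in>cl ` set xs. [:- a I, 1:] ^ (card {x \<in> set xs. cl x = I} - 1)) *
    char_poly (matL ks (blow_up id a b (\<lambda>I. \<Sum>x\<in>{x \<in> set xs. cl x = I}. w x)))"
  using assms
proof (induction "length xs" arbitrary: xs w rule: less_induct)
  case less
  show ?case
  proof (cases "inj_on cl (set xs)")
    case True
    have "card {x \<in> set xs. cl x = I} = 1" if "I \<in> cl ` set xs" for I
      using True that by (auto simp: inj_on_def card_1_singleton_iff)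
    hence "(\<Prod>I\<in>cl ` set xs. [:- a I, 1:] ^ (card {x \<in> set xs. cl x = I} - 1)) = 1"
      by simp
    thus ?thesis
      using char_poly_blow_up_inj[OF less.prems True] by simp
  next
    case False
    with less.prems(1) obtain v u rest where dist: "distinct (v # u # rest)"
      and set_xs: "set (v # u # rest) = set xs" and cl: "cl u = cl v"
      by (rule split_twins)
    have uv: "u \<in> set xs" "v \<in> set xs" "u \<noteq> v" and set_rest: "set (u # rest) = set xs - {v}"
      using dist set_xs by auto
    have "length (v # u # rest) = length xs"
      using dist less.prems(1) set_xs by (metis distinct_card)
    hence shorter: "length (u # rest) < length xs"
      by simp
    have "cl ` set xs = cl ` set (u # rest)"
      unfolding set_xs[symmetric] using cl by simp
    hence "set ks = cl ` set (u # rest)"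
      using less.prems(3) by simp
    from less.hyps[OF shorter _ less.prems(2) this, of "w(u := w u + w v)"]
    have IH: "char_poly (matL (u # rest) (blow_up cl a b (w(u := w u + w v)))) =
      (\<Prod>I\<in>cl ` set xs. [:- a I, 1:] ^ (card {x \<in> set xs - {v}. cl x = I} - 1)) *
      char_poly (matL ks (blow_up id a b (\<lambda>I. \<Sum>x\<in>{x \<in> set xs - {v}. cl x = I}. (w(u := w u + w v)) x)))"
      using dist \<open>cl ` set xs = cl ` set (u # rest)\<close> unfolding set_rest by simp
    have "char_poly (matL xs (blow_up cl a b w)) = char_poly (matL (v # u # rest) (blow_up cl a b w))"
      using dist less.prems(1) set_xs by (intro char_poly_matL_set) auto
    also have "\<dots> = [:- a (cl v), 1:] * char_poly (matL (u # rest) (blow_up cl a b (w(u := w u + w v))))"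
      using char_poly_blow_up_twin[OF dist cl[symmetric], where a = a and b = b and w = w] cl
      by simp
    finally show ?thesis
      unfolding IH mult.assoc[symmetric]
        prod_class_remove[OF finite_set uv cl, where f = "\<lambda>I. [:- a I, 1:]"]
        sum_class_merge[OF finite_set uv cl] .
  qed
qed

lemma char_poly_blow_up_symmetrize:
  fixes W :: "'c \<Rightarrow> real"
  assumes pos: "\<And>I. I \<in> set ks \<Longrightarrow> W I > 0"
  shows "char_poly (matL ks (blow_up id a b W)) =
    char_poly (matL ks (\<lambda>I J. (if I = J then a I else 0) + sqrt (W I * W J) * b I J))"
proof (rule char_poly_similar)
  define n where "n = length ks"
  define P where "P = mat_diag n (\<lambda>i. sqrt (W (ks ! i)))"
  define Q where "Q = mat_diag n (\<lambda>i. 1 / sqrt (W (ks ! i)))"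
  have "sqrt (W (ks ! i)) * (1 / sqrt (W (ks ! i))) = 1" if "i < n" for i
    using pos[OF nth_mem] that unfolding n_def by fastforce
  hence PQ: "P * Q = 1\<^sub>m n" and QP: "Q * P = 1\<^sub>m n"
    unfolding P_def Q_def mat_diag_diag by (auto intro!: eq_matI simp: mat_diag_def mult.commute)
  have A_eq: "matL ks (blow_up id a b W) =
      P * matL ks (\<lambda>I J. (if I = J then a I else 0) + sqrt (W I * W J) * b I J) * Q"
    unfolding P_def Q_def n_def mat_diag_mult_matL[where d = "\<lambda>I. sqrt (W I)"]
      matL_mult_mat_diag[where d = "\<lambda>I. 1 / sqrt (W I)"]
  proof (rule matL_cong)
    fix I J assume "I \<in> set ks" "J \<in> set ks"
    hence "W I > 0" "W J > 0"
      using pos by auto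
    thus "blow_up id a b W I J =
        sqrt (W I) * ((if I = J then a I else 0) + sqrt (W I * W J) * b I J) * (1 / sqrt (W J))"
      by (auto simp: blow_up_def real_sqrt_mult field_simps)
  qed
  show "similar_mat (matL ks (blow_up id a b W))
      (matL ks (\<lambda>I J. (if I = J then a I else 0) + sqrt (W I * W J) * b I J))"
    by (rule similar_matI[OF _ PQ QP A_eq]) (simp add: P_def Q_def n_def)
qed

section \<open>Divisor classes of the ideals of Z_n\<close>

text \<open>The vertex of G in the class [d], i.e. with the same \<Xi> as d.\<close>
definition class_rep :: "nat \<Rightarrow> nat \<Rightarrow> nat" where
  "class_rep n d = (\<Prod>p\<in>Xi n d. p ^ multiplicity p n)"

lemma Xi_subset: "Xi n d \<subseteq> prime_factors n"
  unfolding Xi_def by auto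

lemma multiplicity_prime_power_prod:
  fixes n :: nat
  assumes "S \<subseteq> prime_factors n" "prime q"
  shows "multiplicity q (\<Prod>p\<in>S. p ^ multiplicity p n) = (if q \<in> S then multiplicity q n else 0)"
  using assms by (intro multiplicity_prod_prime_powers) (auto intro: finite_subset)

lemma Xi_prime_power_prod:
  assumes "S \<subseteq> prime_factors n"
  shows "Xi n (\<Prod>p\<in>S. p ^ multiplicity p n) = S"
proof -
  have "q \<in> Xi n (\<Prod>p\<in>S. p ^ multiplicity p n) \<longleftrightarrow> q \<in> S" if "q \<in> prime_factors n" for q
    using that multiplicity_prime_power_prod[OF assms, of q] by (auto simp: Xi_def prime_factors_multiplicity)
  thus ?thesis
    using assms Xi_subset by blast
qed

lemma prime_power_prod_dvd:
  fixes n :: nat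
  assumes "S \<subseteq> prime_factors n"
  shows "(\<Prod>p\<in>S. p ^ multiplicity p n) dvd n"
proof (rule multiplicity_le_imp_dvd)
  have "(\<Prod>p\<in>S. p ^ multiplicity p n) > 0"
    using assms by (intro prod_pos) (auto simp: prime_factors_multiplicity prime_gt_0_nat)
  thus "(\<Prod>p\<in>S. p ^ multiplicity p n) \<noteq> 0"
    by simp
qed (use multiplicity_prime_power_prod[OF assms] in simp)

lemma divisor_eqI:
  fixes n d e :: nat
  assumes "n > 0" "d dvd n" "e dvd n"
    and "\<And>p. p \<in> prime_factors n \<Longrightarrow> multiplicity p d = multiplicity p e"
  shows "d = e"
proof -
  have "multiplicity p d = multiplicity p e" if "prime p" for p
  proof (cases "p \<in> prime_factors n")
    case False
    hence "multiplicity p n = 0"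
      using that assms(1) by (simp add: prime_factors_multiplicity)
    thus ?thesis
      using dvd_imp_multiplicity_le[OF assms(2)] dvd_imp_multiplicity_le[OF assms(3)] assms(1)
      by (metis le_zero_eq not_gr0)
  qed (use assms(4) in simp)
  moreover have "d \<noteq> 0" "e \<noteq> 0"
    using assms(1-3) by auto
  ultimately show ?thesis
    using multiplicity_eq_imp_eq[of d e] by simp
qed

lemma Uset_iff:
  assumes "n > 0"
  shows "d \<in> Uset n \<longleftrightarrow> d dvd n \<and> Xi n d \<noteq> {} \<and> Xi n d \<noteq> prime_factors n"
proof
  assume d: "d \<in> Uset n"
  hence "d dvd n" "d \<noteq> n" "\<not> essential n d"
    unfolding Uset_def ideals_def by auto
  moreover have "Xi n d \<noteq> prime_factors n"
  proof
    assume "Xi n d = prime_factors n"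
    hence "d = n"
      using divisor_eqI[OF assms \<open>d dvd n\<close> dvd_refl] unfolding Xi_def by blast
    thus False
      using \<open>d \<noteq> n\<close> by simp
  qed
  ultimately show "d dvd n \<and> Xi n d \<noteq> {} \<and> Xi n d \<noteq> prime_factors n"
    unfolding essential_def Xi_def by auto
next
  assume d: "d dvd n \<and> Xi n d \<noteq> {} \<and> Xi n d \<noteq> prime_factors n"
  hence "d \<noteq> 1"
    by (auto simp: Xi_def prime_factors_multiplicity)
  moreover have "d \<noteq> n"
    using d by (auto simp: Xi_def)
  ultimately show "d \<in> Uset n"
    using d unfolding Uset_def ideals_def essential_def Xi_def by auto
qed

lemma Xi_class_rep: "Xi n (class_rep n d) = Xi n d"
  unfolding class_rep_def by (rule Xi_prime_power_prod[OF Xi_subset])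

lemma VG_iff_class_rep:
  assumes "n > 0"
  shows "J \<in> VG n \<longleftrightarrow> J \<in> Uset n \<and> class_rep n J = J"
proof
  assume "J \<in> VG n"
  then obtain S where S: "S \<subseteq> prime_factors n" "S \<noteq> {}" "S \<noteq> prime_factors n"
    and J: "J = (\<Prod>p\<in>S. p ^ multiplicity p n)"
    unfolding VG_def by blast
  hence "Xi n J = S"
    using Xi_prime_power_prod by blast
  thus "J \<in> Uset n \<and> class_rep n J = J"
    using S J prime_power_prod_dvd[OF S(1)] by (simp add: Uset_iff[OF assms] class_rep_def)
next
  assume J: "J \<in> Uset n \<and> class_rep n J = J"
  hence "Xi n J \<noteq> {}" "Xi n J \<noteq> prime_factors n" "J = (\<Prod>p\<in>Xi n J. p ^ multiplicity p n)"
    by (simp_all add: Uset_iff[OF assms] class_rep_def)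
  thus "J \<in> VG n"
    unfolding VG_def using Xi_subset by blast
qed

lemma class_rep_in_VG:
  assumes "n > 0" "d \<in> Uset n"
  shows "class_rep n d \<in> VG n"
proof -
  have "class_rep n (class_rep n d) = class_rep n d"
    unfolding class_rep_def[of n "class_rep n d"] Xi_class_rep by (simp add: class_rep_def)
  moreover have "class_rep n d dvd n"
    unfolding class_rep_def by (rule prime_power_prod_dvd[OF Xi_subset])
  ultimately show ?thesis
    using assms by (simp add: VG_iff_class_rep Uset_iff Xi_class_rep)
qed

lemma class_rep_image:
  assumes "n > 0"
  shows "class_rep n ` Uset n = VG n"
  using class_rep_in_VG[OF assms] VG_iff_class_rep[OF assms] by (auto intro: image_eqI[OF sym])

lemma finite_VG: "finite (VG n)"
proof -
  have "VG n \<subseteq> (\<lambda>S. \<Prod>p\<in>S. p ^ multiplicity p n) ` Pow (prime_factors n)"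
    unfolding VG_def by auto
  thus ?thesis
    by (rule finite_subset) simp
qed

lemma finite_Uset: "n > 0 \<Longrightarrow> finite (Uset n)"
  by (rule finite_subset[of _ "{d. d dvd n}"]) (auto simp: Uset_def ideals_def)

lemma divisor_with_exponents:
  fixes n :: nat
  assumes "\<And>p. p \<in> prime_factors n \<Longrightarrow> e p \<le> multiplicity p n"
  shows "(\<Prod>p\<in>prime_factors n. p ^ e p) dvd n"
    and "\<And>p. p \<in> prime_factors n \<Longrightarrow> multiplicity p (\<Prod>p\<in>prime_factors n. p ^ e p) = e p"
proof -
  define d where "d = (\<Prod>p\<in>prime_factors n. p ^ e p)"
  have mult: "multiplicity q d = (if q \<in> prime_factors n then e q else 0)" if "prime q" for q
    unfolding d_def using that by (intro multiplicity_prod_prime_powers) auto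
  have "d \<noteq> 0"
    unfolding d_def by (auto dest: in_prime_factors_imp_prime)
  thus "d dvd n"
    by (rule multiplicity_le_imp_dvd) (use mult assms in \<open>auto split: if_splits\<close>)
  show "multiplicity p d = e p" if "p \<in> prime_factors n" for p
    using that mult by (simp add: prime_factors_multiplicity)
qed

lemma card_divisors_with_Xi:
  fixes n :: nat
  assumes n: "n > 0" and S: "S \<subseteq> prime_factors n"
  shows "card {d. d dvd n \<and> Xi n d = S} = (\<Prod>p\<in>prime_factors n - S. multiplicity p n)"
proof -
  let ?P = "prime_factors n"
  define R where "R p = (if p \<in> S then {multiplicity p n} else {0..<multiplicity p n})" for p
  have R_iff: "multiplicity p d \<in> R p \<longleftrightarrow> (p \<in> S \<longleftrightarrow> multiplicity p d = multiplicity p n)"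
    if "d dvd n" for p d
    using dvd_imp_multiplicity_le[OF that, of p] n by (auto simp: R_def)
  have exponents: "restrict (\<lambda>p. multiplicity p d) ?P \<in> PiE ?P R \<longleftrightarrow> Xi n d = S" if "d dvd n" for d
    unfolding restrict_PiE_iff R_iff[OF that] Xi_def using S by auto
  have "bij_betw (\<lambda>d. restrict (\<lambda>p. multiplicity p d) ?P) {d. d dvd n \<and> Xi n d = S} (PiE ?P R)"
  proof (rule bij_betw_imageI)
    show "inj_on (\<lambda>d. restrict (\<lambda>p. multiplicity p d) ?P) {d. d dvd n \<and> Xi n d = S}"
    proof (rule inj_onI)
      fix x y assume "x \<in> {d. d dvd n \<and> Xi n d = S}" "y \<in> {d. d dvd n \<and> Xi n d = S}"
        and eq: "restrict (\<lambda>p. multiplicity p x) ?P = restrict (\<lambda>p. multiplicity p y) ?P"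
      moreover have "multiplicity p x = multiplicity p y" if "p \<in> ?P" for p
        using fun_cong[OF eq, of p] that by simp
      ultimately show "x = y"
        using divisor_eqI[OF n] by auto
    qed
    show "(\<lambda>d. restrict (\<lambda>p. multiplicity p d) ?P) ` {d. d dvd n \<and> Xi n d = S} = PiE ?P R"
    proof (intro subset_antisym subsetI)
      fix e assume "e \<in> (\<lambda>d. restrict (\<lambda>p. multiplicity p d) ?P) ` {d. d dvd n \<and> Xi n d = S}"
      then obtain d where "d dvd n" "Xi n d = S" "e = restrict (\<lambda>p. multiplicity p d) ?P"
        by blast
      thus "e \<in> PiE ?P R"
        using exponents by blast
    next
      fix e assume e: "e \<in> PiE ?P R"
      hence "e p \<le> multiplicity p n" if "p \<in> ?P" for p
        using that by (auto simp: R_def PiE_def Pi_def split: if_splits)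
      note d = divisor_with_exponents[of n e, OF this]
      have restr: "restrict (\<lambda>p. multiplicity p (\<Prod>p\<in>?P. p ^ e p)) ?P = e"
        using e d(2) by (auto simp: PiE_def extensional_def)
      hence "Xi n (\<Prod>p\<in>?P. p ^ e p) = S"
        using e exponents[OF d(1)] by simp
      thus "e \<in> (\<lambda>d. restrict (\<lambda>p. multiplicity p d) ?P) ` {d. d dvd n \<and> Xi n d = S}"
        using d(1) restr by (intro image_eqI[where x = "\<Prod>p\<in>?P. p ^ e p"]) simp_all
    qed
  qed
  hence "card {d. d dvd n \<and> Xi n d = S} = (\<Prod>p\<in>?P. card (R p))"
    by (simp add: bij_betw_same_card card_PiE)
  also have "\<dots> = (\<Prod>p\<in>?P. if p \<in> S then 1 else multiplicity p n)"
    by (intro prod.cong) (auto simp: R_def)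
  also have "\<dots> = (\<Prod>p\<in>?P - S. multiplicity p n)"
    by (simp add: prod.If_cases Diff_eq)
  finally show ?thesis .
qed

lemma class_rep_eq_iff:
  assumes "n > 0" "J \<in> VG n"
  shows "class_rep n d = J \<longleftrightarrow> Xi n d = Xi n J"
proof
  assume "class_rep n d = J"
  thus "Xi n d = Xi n J"
    using Xi_class_rep by metis
next
  assume "Xi n d = Xi n J"
  hence "class_rep n d = class_rep n J"
    by (simp add: class_rep_def)
  thus "class_rep n d = J"
    using assms by (simp add: VG_iff_class_rep)
qed

lemma card_class:
  assumes n: "n > 0" and J: "J \<in> VG n"
  shows "card {d \<in> Uset n. class_rep n d = J} = nI n J"
proof -
  have "Xi n J \<noteq> {}" "Xi n J \<noteq> prime_factors n"
    using J n by (simp_all add: VG_iff_class_rep Uset_iff)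
  hence "{d \<in> Uset n. class_rep n d = J} = {d. d dvd n \<and> Xi n d = Xi n J}"
    using class_rep_eq_iff[OF n J] by (auto simp: Uset_iff[OF n])
  thus ?thesis
    unfolding nI_def using card_divisors_with_Xi[OF n Xi_subset] by simp
qed

lemma Eadj_iff_Xi_disjoint:
  assumes n: "n > 0" and x: "x \<in> Uset n" and y: "y \<in> Uset n"
  shows "Eadj n x y \<longleftrightarrow> Xi n x \<inter> Xi n y = {}"
proof -
  have dvd: "x dvd n" "y dvd n" and "Xi n x \<noteq> {}"
    using x y by (simp_all add: Uset_iff[OF n])
  have "multiplicity p (gcd x y) = multiplicity p n \<longleftrightarrow>
      multiplicity p x = multiplicity p n \<and> multiplicity p y = multiplicity p n"
    if "p \<in> prime_factors n" for p
  proof -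
    have "x \<noteq> 0" "y \<noteq> 0" "prime p"
      using dvd n that by auto
    hence "multiplicity p (gcd x y) = min (multiplicity p x) (multiplicity p y)"
      by (rule multiplicity_gcd)
    moreover have "multiplicity p x \<le> multiplicity p n" "multiplicity p y \<le> multiplicity p n"
      using dvd n by (simp_all add: dvd_imp_multiplicity_le)
    ultimately show ?thesis
      by linarith
  qed
  hence "essential n (gcd x y) \<longleftrightarrow> Xi n x \<inter> Xi n y = {}"
    using dvd unfolding essential_def Xi_def by (auto intro: dvd_trans)
  moreover have "x = y \<Longrightarrow> Xi n x \<inter> Xi n y \<noteq> {}"
    using \<open>Xi n x \<noteq> {}\<close> by simp
  ultimately show ?thesis
    unfolding Eadj_def by blast
qed

lemma Eadj_iff_Gadj_class_rep:
  "n > 0 \<Longrightarrow> x \<in> Uset n \<Longrightarrow> y \<in> Uset n \<Longrightarrow> Eadj n x y \<longleftrightarrow> Gadj n (class_rep n x) (class_rep n y)"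
  unfolding Gadj_def Xi_class_rep by (rule Eadj_iff_Xi_disjoint)

lemma not_Gadj_self: "n > 0 \<Longrightarrow> I \<in> VG n \<Longrightarrow> \<not> Gadj n I I"
  unfolding Gadj_def by (simp add: VG_iff_class_rep Uset_iff)

lemma nI_pos: "nI n J > 0"
  unfolding nI_def by (rule prod_pos) (simp add: prime_factors_multiplicity)

lemma NI_pos:
  assumes n: "n > 0" and J: "J \<in> VG n"
  shows "NI n J > 0"
proof -
  let ?S = "prime_factors n - Xi n J"
  define K where "K = (\<Prod>p\<in>?S. p ^ multiplicity p n)"
  have "?S \<noteq> {}" "?S \<noteq> prime_factors n"
    using J n Xi_subset[of n J] by (auto simp: VG_iff_class_rep Uset_iff)
  hence "K \<in> VG n"
    unfolding VG_def K_def by blast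
  moreover have "Xi n K = ?S"
    unfolding K_def by (simp add: Xi_prime_power_prod)
  ultimately have "K \<in> {K \<in> VG n. Xi n J \<inter> Xi n K = {}}"
    by auto
  hence "nI n K \<le> NI n J"
    unfolding NI_def by (rule member_le_sum) (simp_all add: finite_VG)
  thus ?thesis
    using nI_pos[of n K] by linarith
qed

lemma card_Eadj_neighbours:
  assumes n: "n > 0" and x: "x \<in> Uset n"
  shows "card {y \<in> Uset n. Eadj n x y} = NI n (class_rep n x)"
proof -
  let ?K = "{J \<in> VG n. Xi n (class_rep n x) \<inter> Xi n J = {}}"
  have nbr: "Eadj n x y \<longleftrightarrow> class_rep n y \<in> ?K" if "y \<in> Uset n" for y
    using that Eadj_iff_Xi_disjoint[OF n x that] class_rep_in_VG[OF n that] by (simp add: Xi_class_rep)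
  have nbrs: "{y \<in> Uset n. Eadj n x y} = (\<Union>J\<in>?K. {y \<in> Uset n. class_rep n y = J})"
  proof (rule Set.set_eqI)
    fix y
    show "y \<in> {y \<in> Uset n. Eadj n x y} \<longleftrightarrow> y \<in> (\<Union>J\<in>?K. {y \<in> Uset n. class_rep n y = J})"
      by (cases "y \<in> Uset n") (simp_all add: nbr)
  qed
  have "card {y \<in> Uset n. Eadj n x y} = (\<Sum>J\<in>?K. card {y \<in> Uset n. class_rep n y = J})"
    unfolding nbrs
  proof (rule card_UN_disjoint)
    show "finite ?K"
      using finite_VG by simp
    show "\<forall>J\<in>?K. finite {y \<in> Uset n. class_rep n y = J}"
      using finite_Uset[OF n] by simp
    show "\<forall>I\<in>?K. \<forall>J\<in>?K. I \<noteq> J \<longrightarrow>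
        {y \<in> Uset n. class_rep n y = I} \<inter> {y \<in> Uset n. class_rep n y = J} = {}"
      by auto
  qed
  also have "\<dots> = (\<Sum>J\<in>?K. nI n J)"
  proof (rule sum.cong)
    fix J assume "J \<in> ?K"
    thus "card {y \<in> Uset n. class_rep n y = J} = nI n J"
      using card_class[OF n] by blast
  qed (rule refl)
  finally show ?thesis
    unfolding NI_def .
qed

section \<open>Spectra of the essential ideal graph on U\<close>

lemma char_poly_blow_up_Uset:
  fixes a :: "nat \<Rightarrow> real"
  assumes n: "n > 0"
  shows "char_poly (matL (vlist (Uset n)) (blow_up (class_rep n) a b (\<lambda>_. 1))) =
    (\<Prod>I\<in>VG n. [:- a I, 1:] ^ (nI n I - 1)) *
    char_poly (vmat (VG n) (\<lambda>I J. (if I = J then a I else 0) + sqrt (real (nI n I) * real (nI n J)) * b I J))"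
proof -
  have xs: "distinct (vlist (Uset n))" "set (vlist (Uset n)) = Uset n"
    using finite_Uset[OF n] by (simp_all add: vlist_def)
  have ks: "distinct (vlist (VG n))" "set (vlist (VG n)) = class_rep n ` Uset n"
    using finite_VG class_rep_image[OF n] by (simp_all add: vlist_def)
  have class_card: "card {x \<in> Uset n. class_rep n x = I} = nI n I" if "I \<in> VG n" for I
    using card_class[OF n that] .
  have "char_poly (matL (vlist (Uset n)) (blow_up (class_rep n) a b (\<lambda>_. 1))) =
      (\<Prod>I\<in>VG n. [:- a I, 1:] ^ (card {x \<in> Uset n. class_rep n x = I} - 1)) *
      char_poly (matL (vlist (VG n)) (blow_up id a b (\<lambda>I. real (card {x \<in> Uset n. class_rep n x = I}))))"
    using char_poly_blow_up[OF xs(1) ks(1), of "class_rep n" a b "\<lambda>_. 1"] ks(2) xs(2) class_rep_image[OF n]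
    by simp
  also have "(\<Prod>I\<in>VG n. [:- a I, 1:] ^ (card {x \<in> Uset n. class_rep n x = I} - 1)) =
      (\<Prod>I\<in>VG n. [:- a I, 1:] ^ (nI n I - 1))"
    by (rule prod.cong) (simp_all add: class_card)
  also have "matL (vlist (VG n)) (blow_up id a b (\<lambda>I. real (card {x \<in> Uset n. class_rep n x = I}))) =
      matL (vlist (VG n)) (blow_up id a b (\<lambda>I. real (nI n I)))"
    using ks(2) class_rep_image[OF n] by (intro matL_cong) (simp add: blow_up_def class_card)
  also have "char_poly \<dots> = char_poly (vmat (VG n)
      (\<lambda>I J. (if I = J then a I else 0) + sqrt (real (nI n I) * real (nI n J)) * b I J))"
    unfolding vmat_eq_matL by (rule char_poly_blow_up_symmetrize) (simp add: nI_pos)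
  finally show ?thesis .
qed

lemma deg_Uset: "n > 0 \<Longrightarrow> x \<in> Uset n \<Longrightarrow> deg (Uset n) (Eadj n) x = real (NI n (class_rep n x))"
  unfolding deg_def by (simp add: card_Eadj_neighbours)

lemma Eadj_Uset_blow_up:
  assumes n: "n > 0" and "x \<in> Uset n" "y \<in> Uset n"
  shows "(if x = y then deg (Uset n) (Eadj n) x else 0) + s * (if Eadj n x y then 1 else 0) =
    blow_up (class_rep n) (\<lambda>I. real (NI n I)) (\<lambda>I J. s * (if Gadj n I J then 1 else 0)) (\<lambda>_. 1) x y"
  using assms deg_Uset Eadj_iff_Gadj_class_rep not_Gadj_self class_rep_in_VG
  by (simp add: blow_up_def)

lemma laplacian_Uset:
  assumes n: "n > 0"
  shows "laplacian (Uset n) (Eadj n) = matL (vlist (Uset n))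
    (blow_up (class_rep n) (\<lambda>I. real (NI n I)) (\<lambda>I J. - (if Gadj n I J then 1 else 0)) (\<lambda>_. 1))"
  unfolding laplacian_def deg_matrix_def adj_matrix_def vmat_eq_matL matL_diff
  using finite_Uset[OF n] Eadj_Uset_blow_up[OF n, where s = "- 1"]
  by (intro matL_cong) (simp add: vlist_def)

lemma signless_laplacian_Uset:
  assumes n: "n > 0"
  shows "signless_laplacian (Uset n) (Eadj n) = matL (vlist (Uset n))
    (blow_up (class_rep n) (\<lambda>I. real (NI n I)) (\<lambda>I J. if Gadj n I J then 1 else 0) (\<lambda>_. 1))"
  unfolding signless_laplacian_def deg_matrix_def adj_matrix_def vmat_eq_matL matL_add
  using finite_Uset[OF n] Eadj_Uset_blow_up[OF n, where s = 1]
  by (intro matL_cong) (simp add: vlist_def)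

lemma normalized_laplacian_Uset:
  assumes n: "n > 0"
  shows "normalized_laplacian (Uset n) (Eadj n) = matL (vlist (Uset n))
    (blow_up (class_rep n) (\<lambda>_. 1)
      (\<lambda>I J. - (if Gadj n I J then 1 else 0) / (sqrt (real (NI n I)) * sqrt (real (NI n J)))) (\<lambda>_. 1))"
proof -
  let ?d = "\<lambda>x. 1 / sqrt (deg (Uset n) (Eadj n) x)"
  have xs: "distinct (vlist (Uset n))" "set (vlist (Uset n)) = Uset n"
    using finite_Uset[OF n] by (simp_all add: vlist_def)
  have "normalized_laplacian (Uset n) (Eadj n) = matL (vlist (Uset n)) (\<lambda>x y. ?d x *
      blow_up (class_rep n) (\<lambda>I. real (NI n I)) (\<lambda>I J. - (if Gadj n I J then 1 else 0)) (\<lambda>_. 1) x y * ?d y)"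
    unfolding normalized_laplacian_def laplacian_Uset[OF n] deg_inv_sqrt_matrix_def vmat_eq_matL
      matL_diagonal[OF xs(1)] mat_diag_mult_matL[where d = ?d] matL_mult_mat_diag[where d = ?d] ..
  also have "\<dots> = matL (vlist (Uset n)) (blow_up (class_rep n) (\<lambda>_. 1)
      (\<lambda>I J. - (if Gadj n I J then 1 else 0) / (sqrt (real (NI n I)) * sqrt (real (NI n J)))) (\<lambda>_. 1))"
  proof (rule matL_cong)
    fix x y assume "x \<in> set (vlist (Uset n))" "y \<in> set (vlist (Uset n))"
    hence x: "x \<in> Uset n" and y: "y \<in> Uset n"
      using xs(2) by auto
    have "real (NI n (class_rep n x)) > 0"
      using NI_pos[OF n class_rep_in_VG[OF n x]] by simp
    thus "?d x * blow_up (class_rep n) (\<lambda>I. real (NI n I)) (\<lambda>I J. - (if Gadj n I J then 1 else 0)) (\<lambda>_. 1) x y * ?d y =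
        blow_up (class_rep n) (\<lambda>_. 1)
          (\<lambda>I J. - (if Gadj n I J then 1 else 0) / (sqrt (real (NI n I)) * sqrt (real (NI n J)))) (\<lambda>_. 1) x y"
      using deg_Uset[OF n x] deg_Uset[OF n y] by (auto simp: blow_up_def diff_divide_distrib)
  qed
  finally show ?thesis .
qed

lemma char_poly_laplacian_Uset:
  assumes n: "n > 0"
  shows "char_poly (laplacian (Uset n) (Eadj n)) =
    (\<Prod>I\<in>VG n. [:- real (NI n I), 1:] ^ (nI n I - 1)) * char_poly (CL n)"
proof -
  have "vmat (VG n) (\<lambda>I J. (if I = J then real (NI n I) else 0) +
      sqrt (real (nI n I) * real (nI n J)) * - (if Gadj n I J then 1 else 0)) = CL n"
    unfolding CL_def vmat_eq_matL using finite_VG not_Gadj_self[OF n]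
    by (intro matL_cong) (auto simp: vlist_def)
  thus ?thesis
    by (simp add: laplacian_Uset[OF n] char_poly_blow_up_Uset[OF n])
qed

lemma char_poly_signless_laplacian_Uset:
  assumes n: "n > 0"
  shows "char_poly (signless_laplacian (Uset n) (Eadj n)) =
    (\<Prod>I\<in>VG n. [:- real (NI n I), 1:] ^ (nI n I - 1)) * char_poly (CQ n)"
proof -
  have "vmat (VG n) (\<lambda>I J. (if I = J then real (NI n I) else 0) +
      sqrt (real (nI n I) * real (nI n J)) * (if Gadj n I J then 1 else 0)) = CQ n"
    unfolding CQ_def vmat_eq_matL using finite_VG not_Gadj_self[OF n]
    by (intro matL_cong) (auto simp: vlist_def)
  thus ?thesis
    by (simp add: signless_laplacian_Uset[OF n] char_poly_blow_up_Uset[OF n])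
qed

lemma char_poly_normalized_laplacian_Uset:
  assumes n: "n > 0"
  shows "char_poly (normalized_laplacian (Uset n) (Eadj n)) =
    [:- 1, 1:] ^ (\<Sum>I\<in>VG n. nI n I - 1) * char_poly (CNL n)"
proof -
  have "vmat (VG n) (\<lambda>I J. (if I = J then 1 else 0) + sqrt (real (nI n I) * real (nI n J)) *
      (- (if Gadj n I J then 1 else 0) / (sqrt (real (NI n I)) * sqrt (real (NI n J))))) = CNL n"
    unfolding CNL_def vmat_eq_matL using finite_VG not_Gadj_self[OF n]
    by (intro matL_cong) (auto simp: vlist_def real_sqrt_mult real_sqrt_divide)
  thus ?thesis
    by (simp add: normalized_laplacian_Uset[OF n] char_poly_blow_up_Uset[OF n] power_sum)
qed

lemma prod_power_pred_filter:
  assumes "finite A"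
  shows "(\<Prod>x\<in>{x \<in> A. k x > 1}. f x ^ (k x - 1)) = (\<Prod>x\<in>A. f x ^ (k x - 1))"
proof (rule prod.mono_neutral_left)
  show "\<forall>x\<in>A - {x \<in> A. k x > 1}. f x ^ (k x - 1) = 1"
  proof
    fix x assume "x \<in> A - {x \<in> A. k x > 1}"
    hence "k x - 1 = 0"
      by auto
    thus "f x ^ (k x - 1) = 1"
      by simp
  qed
qed (use assms in auto)

theorem mainTheorem9:
  fixes n :: nat
  assumes "n > 0"
    and "\<exists>p\<in>prime_factors n. multiplicity p n > 1"
  shows "(char_poly (laplacian (Uset n) (Eadj n)) =
           (\<Prod>I\<in>{I\<in>VG n. nI n I > 1}. [:- real (NI n I), 1:] ^ (nI n I - 1)) * char_poly (CL n)) \<and>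
         (char_poly (signless_laplacian (Uset n) (Eadj n)) =
           (\<Prod>I\<in>VG n. [:- real (NI n I), 1:] ^ (nI n I - 1)) * char_poly (CQ n)) \<and>
         (char_poly (normalized_laplacian (Uset n) (Eadj n)) =
           [:- 1, 1:] ^ (\<Sum>I\<in>VG n. nI n I - 1) * char_poly (CNL n))"
  using char_poly_laplacian_Uset[OF assms(1)] char_poly_signless_laplacian_Uset[OF assms(1)]
    char_poly_normalized_laplacian_Uset[OF assms(1)]
    prod_power_pred_filter[OF finite_VG, where k = "nI n" and f = "\<lambda>I. [:- real (NI n I), 1:]"]
  by simp

end
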